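(* Suppose the index set $\{1,\dots,q\}$ is partitioned into disjoint nonempty cliques $V_1,\dots,V_J$ with $v_g=|V_g|$, and let $\tilde\beta$ be a minimizer over $b\in\mathbb R^q$ of $$G(b;\lambda_2)=\frac1{2n}\|y-Xb\|^2+\frac12\lambda_2\sum_{g=1}^J b_g'(I_{v_g}-v_g^{-1}\mathbf 1_g\mathbf 1_g')b_g,$$ where $\lambda_2\ge0$, $b_g=(b_j)_{j\in V_g}$ and $\mathbf 1_g$ is the all-ones vector of length $v_g$. Let $\bar\beta_g=v_g^{-1}\sum_{j\in V_g}\tilde\beta_j$. Then (i) for any $1\le g\le J$ and $j,k\in V_g$: $\lambda_2|\tilde\beta_j-\tilde\beta_k|\le\frac1n\|x_j-x_k\|\,\|y\|$; (ii) for any $g\neq h$, $j\in V_g$, $k\in V_h$: $\lambda_2|\tilde\beta_j-\bar\beta_g-(\tilde\beta_k-\bar\beta_h)|\le\frac1n\|x_j-x_k\|\,\|y\|$.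
   Context: $y\in\mathbb R^n$, $X=(x_1,\dots,x_q)\in\mathbb R^{n\times q}$ a real design matrix. The penalty is the quadratic form of the normalized Laplacian $L=I_q-A$ with block-diagonal $A=\operatorname{diag}(A_1,\dots,A_J)$, $A_g=v_g^{-1}\mathbf 1_g\mathbf 1_g'$ (after ordering indices by cliques). *)

theory Defs
  imports "HOL-Analysis.Analysis" "HOL-Library.Disjoint_Sets"
begin

text \<open>Clique-wise penalty: sum over cliques g of the quadratic form
  b_g' (I - v_g^{-1} 1 1') b_g, written out entrywise.\<close>
definition clique_penalty :: "'q::finite set set \<Rightarrow> real^'q \<Rightarrow> real" where
  "clique_penalty P b =
     (\<Sum>g\<in>P. \<Sum>j\<in>g. \<Sum>k\<in>g.
        b$j * ((if j = k then 1 else 0) - 1 / real (card g)) * b$k)"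

definition objG :: "real^'n \<Rightarrow> real^'q^'n \<Rightarrow> 'q::finite set set \<Rightarrow> real \<Rightarrow> real^'q \<Rightarrow> real" where
  "objG y X P lam b =
     1 / (2 * real CARD('n)) * (norm (y - X *v b))\<^sup>2 + 1/2 * lam * clique_penalty P b"

definition clique_mean :: "real^'q \<Rightarrow> 'q set \<Rightarrow> real" where
  "clique_mean b g = (\<Sum>j\<in>g. b$j) / real (card g)"

end

theory Submission
  imports Defs
begin

text \<open>
  The penalty is the quadratic form of the block matrix
  \<open>I - A\<close>, \<open>A = diag(v\<^sub>g\<^sup>-\<^sup>1 1 1')\<close>; its bilinear form \<open>clique_form P a b\<close> equals
  \<open>\<Sum>\<^sub>g \<Sum>\<^sub>j\<^sub>\<in>\<^sub>g a\<^sub>j (b\<^sub>j - mean\<^sub>g b)\<close>.  Hence the penalty is a sum of squared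
  deviations from the clique means (so it is nonnegative), and on the
  direction \<open>e\<^sub>j - e\<^sub>k\<close> the form evaluated at \<open>\<beta>\<close> is exactly the centred difference
  \<open>(\<beta>\<^sub>j - mean\<^sub>g \<beta>) - (\<beta>\<^sub>k - mean\<^sub>h \<beta>)\<close>.
  Along any line \<open>\<beta> + t d\<close> the objective is a quadratic polynomial in \<open>t\<close>;
  minimality at \<open>t = 0\<close> forces its linear coefficient to vanish, which gives the
  stationarity equation \<open>\<lambda>\<^sub>2 clique_form P d \<beta> = (1/n) \<langle>y - X\<beta>, X d\<rangle>\<close>.
  Comparing with \<open>b = 0\<close> shows \<open>\<parallel>y - X\<beta>\<parallel> \<le> \<parallel>y\<parallel>\<close>.  Taking \<open>d = e\<^sub>j - e\<^sub>k\<close>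
  (so \<open>X d = x\<^sub>j - x\<^sub>k\<close>) and Cauchy-Schwarz gives (ii) for arbitrary cliques;
  when \<open>g = h\<close> the two means cancel, which is (i).
\<close>

lemma quadratic_nonneg_linear_coeff_zero:
  fixes A B :: real
  assumes nonneg: "\<And>t. 0 \<le> t * A + t\<^sup>2 * B"
  shows "A = 0"
proof -
  define s where "s = 1 / (\<bar>B\<bar> + 1)"
  have s_pos: "s > 0" by (simp add: s_def add_pos_nonneg)
  have sB_lt: "s * B < 1"
    by (simp add: s_def divide_less_eq add_pos_nonneg) (use abs_ge_self[of B] in linarith)
  have "0 \<le> (- s * A) * A + (- s * A)\<^sup>2 * B" by (rule nonneg)
  also have "\<dots> = s * (A\<^sup>2 * (s * B - 1))" by (simp add: power2_eq_square algebra_simps)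
  finally have "0 \<le> A\<^sup>2 * (s * B - 1)" using s_pos by (simp add: zero_le_mult_iff)
  with sB_lt have "A\<^sup>2 \<le> 0" by (simp add: zero_le_mult_iff)
  thus "A = 0" by simp
qed

definition clique_form :: "'q::finite set set \<Rightarrow> real^'q \<Rightarrow> real^'q \<Rightarrow> real" where
  "clique_form P a b = (\<Sum>g\<in>P. \<Sum>j\<in>g. \<Sum>k\<in>g.
        a$j * ((if j = k then 1 else 0) - 1 / real (card g)) * b$k)"

lemma clique_penalty_eq_form: "clique_penalty P b = clique_form P b b"
  by (simp add: clique_penalty_def clique_form_def)

lemma clique_form_sym: "clique_form P a b = clique_form P b a"
  unfolding clique_form_def
  by (rule sum.cong[OF refl], subst sum.swap) (auto intro!: sum.cong simp: algebra_simps)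

lemma clique_row_centres:
  assumes "j \<in> g"
  shows "(\<Sum>k\<in>g. ((if j = k then 1 else 0) - 1 / real (card g)) * b$k) = b$j - clique_mean b g"
proof -
  have "(\<Sum>k\<in>g. ((if j = k then 1 else 0) - 1 / real (card g)) * b$k)
      = (\<Sum>k\<in>g. (if j = k then b$k else 0)) - (\<Sum>k\<in>g. b$k / real (card g))"
    by (subst sum_subtractf[symmetric]) (intro sum.cong refl, simp add: algebra_simps)
  thus ?thesis
    using assms by (simp add: clique_mean_def sum_divide_distrib[symmetric])
qed

lemma clique_form_centred:
  "clique_form P a b = (\<Sum>g\<in>P. \<Sum>j\<in>g. a$j * (b$j - clique_mean b g))"
  unfolding clique_form_def
  by (intro sum.cong refl)
     (simp add: clique_row_centres[symmetric] sum_distrib_left mult.assoc)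

text \<open>The penalty is the sum of squared deviations from the clique means.\<close>
lemma clique_penalty_nonneg: "clique_penalty P b \<ge> 0"
proof -
  have "(\<Sum>j\<in>g. b$j * (b$j - clique_mean b g)) = (\<Sum>j\<in>g. (b$j - clique_mean b g)\<^sup>2)" for g
  proof -
    have deviations_sum_zero: "(\<Sum>j\<in>g. b$j - clique_mean b g) = 0"
      by (cases "g = {}") (simp_all add: sum_subtractf clique_mean_def)
    have "(\<Sum>j\<in>g. (b$j - clique_mean b g)\<^sup>2)
        = (\<Sum>j\<in>g. b$j * (b$j - clique_mean b g)) - clique_mean b g * (\<Sum>j\<in>g. b$j - clique_mean b g)"
      by (simp add: sum_subtractf[symmetric] sum_distrib_left power2_eq_square algebra_simps)
    with deviations_sum_zero show ?thesis by simp
  qed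
  hence "clique_penalty P b = (\<Sum>g\<in>P. \<Sum>j\<in>g. (b$j - clique_mean b g)\<^sup>2)"
    by (simp add: clique_penalty_eq_form clique_form_centred)
  also have "\<dots> \<ge> 0" by (intro sum_nonneg) simp
  finally show ?thesis .
qed

lemma clique_penalty_along_line:
  "clique_penalty P (b + t *\<^sub>R d)
     = clique_penalty P b + t * (2 * clique_form P d b) + t\<^sup>2 * clique_penalty P d"
proof -
  let ?M = "\<lambda>g j k. ((if j = k then 1 else 0) - 1 / real (card g))"
  have "clique_penalty P (b + t *\<^sub>R d) = (\<Sum>g\<in>P. \<Sum>j\<in>g. \<Sum>k\<in>g.
      b$j * ?M g j k * b$k + (t * (d$j * ?M g j k * b$k)
        + (t * (b$j * ?M g j k * d$k) + t\<^sup>2 * (d$j * ?M g j k * d$k))))"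
    unfolding clique_penalty_def
    by (intro sum.cong refl)
       (simp add: algebra_simps power2_eq_square add_divide_distrib diff_divide_distrib)
  also have "\<dots> = clique_form P b b + (t * clique_form P d b
                    + (t * clique_form P b d + t\<^sup>2 * clique_form P d d))"
    unfolding clique_form_def by (simp only: sum.distrib sum_distrib_left)
  finally show ?thesis
    using clique_form_sym[of P b d] by (simp add: clique_penalty_eq_form)
qed

lemma objG_along_line:
  fixes y :: "real^'n" and X :: "real^'q::finite^'n" and b d :: "real^'q"
  defines "r \<equiv> y - X *v b" and "w \<equiv> X *v d" and "n \<equiv> real CARD('n)"
  shows "objG y X P lam (b + t *\<^sub>R d) = objG y X P lam b
           + t * (lam * clique_form P d b - (1/n) * (r \<bullet> w))
           + t\<^sup>2 * ((1 / (2*n)) * (norm w)\<^sup>2 + 1/2 * lam * clique_penalty P d)"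
proof -
  have residual: "y - X *v (b + t *\<^sub>R d) = r - t *\<^sub>R w"
    by (simp add: r_def w_def matrix_vector_right_distrib matrix_vector_mult_scaleR)
  have expand: "(norm (r - t *\<^sub>R w))\<^sup>2 = (norm r)\<^sup>2 - 2 * t * (r \<bullet> w) + t\<^sup>2 * (norm w)\<^sup>2"
    unfolding power2_norm_eq_inner
    by (simp add: inner_diff_left inner_diff_right inner_commute[of w r] power2_eq_square algebra_simps)
  have "n > 0" by (simp add: n_def)
  then show ?thesis
    unfolding objG_def residual expand clique_penalty_along_line r_def[symmetric] n_def[symmetric]
    by (simp add: field_simps power2_eq_square)
qed

lemma minimiser_stationary:
  fixes y :: "real^'n" and X :: "real^'q::finite^'n"
  assumes min: "\<forall>b. objG y X P lam \<beta> \<le> objG y X P lam b"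
  shows "lam * clique_form P d \<beta> = (1 / real CARD('n)) * ((y - X *v \<beta>) \<bullet> (X *v d))"
proof -
  let ?A = "lam * clique_form P d \<beta> - (1 / real CARD('n)) * ((y - X *v \<beta>) \<bullet> (X *v d))"
  let ?B = "(1 / (2 * real CARD('n))) * (norm (X *v d))\<^sup>2 + 1/2 * lam * clique_penalty P d"
  have "0 \<le> t * ?A + t\<^sup>2 * ?B" for t
    using min[rule_format, of "\<beta> + t *\<^sub>R d"]
    unfolding objG_along_line[where b = \<beta> and t = t and d = d] by linarith
  hence "?A = 0" by (rule quadratic_nonneg_linear_coeff_zero)
  thus ?thesis by simp
qed

text \<open>The residual of a minimiser is no longer than \<open>y\<close> (compare with \<open>b = 0\<close>).\<close>
lemma minimiser_residual_le:
  fixes y :: "real^'n" and X :: "real^'q::finite^'n"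
  assumes lam: "lam \<ge> 0" and min: "\<forall>b. objG y X P lam \<beta> \<le> objG y X P lam b"
  shows "norm (y - X *v \<beta>) \<le> norm y"
proof -
  have "objG y X P lam \<beta> \<le> objG y X P lam 0" using min by blast
  moreover have "clique_penalty P (0::real^'q) = 0" by (simp add: clique_penalty_def)
  moreover have "lam * clique_penalty P \<beta> \<ge> 0" using lam clique_penalty_nonneg[of P \<beta>] by simp
  ultimately have "(norm (y - X *v \<beta>))\<^sup>2 / (2 * real CARD('n)) \<le> (norm y)\<^sup>2 / (2 * real CARD('n))"
    unfolding objG_def by simp
  hence "(norm (y - X *v \<beta>))\<^sup>2 \<le> (norm y)\<^sup>2" by (simp add: divide_le_cancel)
  thus ?thesis using power2_le_imp_le norm_ge_zero by blast
qed

text \<open>On the direction \<open>e\<^sub>j - e\<^sub>k\<close> with \<open>j \<in> g\<close>, \<open>k \<in> h\<close>, the form picks out the centred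
  difference; this uses that every index lies in exactly one clique.\<close>
lemma clique_form_axis_diff:
  fixes \<beta> :: "real^'q::finite"
  assumes part: "partition_on UNIV P" and g: "g \<in> P" "j \<in> g" and h: "h \<in> P" "k \<in> h"
  shows "clique_form P (axis j 1 - axis k 1) \<beta>
           = (\<beta>$j - clique_mean \<beta> g) - (\<beta>$k - clique_mean \<beta> h)"
proof -
  let ?F = "\<lambda>g x. \<beta>$x - clique_mean \<beta> g"
  have "clique_form P (axis j 1 - axis k 1) \<beta>
      = (\<Sum>g'\<in>P. (if j \<in> g' then ?F g' j else 0) - (if k \<in> g' then ?F g' k else 0))"
    unfolding clique_form_centred
    by (intro sum.cong refl)
       (simp add: axis_def left_diff_distrib sum_subtractf if_distrib[of "\<lambda>z. z * _"] sum.delta'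
             cong: if_cong)
  also have "\<dots> = (\<Sum>g'\<in>P. (if g' = g then ?F g j else 0)) - (\<Sum>g'\<in>P. (if g' = h then ?F h k else 0))"
    unfolding sum_subtractf[symmetric]
    using partition_onD2[OF part] g h
    by (intro sum.cong refl) (auto dest: disjointD)
  also have "\<dots> = ?F g j - ?F h k" using g h by simp
  finally show ?thesis .
qed

lemma minimiser_centred_difference_bound:
  fixes y :: "real^'n" and X :: "real^'q::finite^'n"
  assumes part: "partition_on UNIV P" and lam: "lam \<ge> 0"
    and min: "\<forall>b. objG y X P lam \<beta> \<le> objG y X P lam b"
    and g: "g \<in> P" "j \<in> g" and h: "h \<in> P" "k \<in> h"
  shows "lam * \<bar>\<beta>$j - clique_mean \<beta> g - (\<beta>$k - clique_mean \<beta> h)\<bar>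
           \<le> 1 / real CARD('n) * norm (column j X - column k X) * norm y"
proof -
  define n where "n = real CARD('n)"
  define w where "w = column j X - column k X"
  have n_pos: "n > 0" by (simp add: n_def)
  have Xd: "X *v (axis j 1 - axis k 1) = w"
    by (simp add: w_def matrix_vector_mult_diff_distrib matrix_vector_mult_basis)
  have "lam * (\<beta>$j - clique_mean \<beta> g - (\<beta>$k - clique_mean \<beta> h)) = (1/n) * ((y - X *v \<beta>) \<bullet> w)"
    using minimiser_stationary[OF min, of "axis j 1 - axis k 1"]
    by (simp add: clique_form_axis_diff[OF part g h] Xd n_def)
  hence "lam * \<bar>\<beta>$j - clique_mean \<beta> g - (\<beta>$k - clique_mean \<beta> h)\<bar> = (1/n) * \<bar>(y - X *v \<beta>) \<bullet> w\<bar>"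
    using lam n_pos by (metis abs_mult abs_of_nonneg abs_of_pos zero_less_divide_1_iff)
  also have "\<dots> \<le> (1/n) * (norm (y - X *v \<beta>) * norm w)"
    using n_pos Cauchy_Schwarz_ineq2[of "y - X *v \<beta>" w] by (simp add: divide_right_mono)
  also have "\<dots> \<le> (1/n) * (norm y * norm w)"
    using n_pos minimiser_residual_le[OF lam min] by (simp add: mult_right_mono divide_right_mono)
  finally show ?thesis by (simp add: n_def w_def algebra_simps)
qed

theorem proposition2:
  fixes y :: "real^'n" and X :: "real^'q::finite^'n"
    and P :: "'q set set" and lam :: real and \<beta> :: "real^'q"
  assumes part: "partition_on UNIV P"
    and lam: "lam \<ge> 0"
    and min: "\<forall>b. objG y X P lam \<beta> \<le> objG y X P lam b"
  shows "(\<forall>g\<in>P. \<forall>j\<in>g. \<forall>k\<in>g.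
            lam * \<bar>\<beta>$j - \<beta>$k\<bar> \<le> 1 / real CARD('n) * norm (column j X - column k X) * norm y)
       \<and> (\<forall>g\<in>P. \<forall>h\<in>P. g \<noteq> h \<longrightarrow> (\<forall>j\<in>g. \<forall>k\<in>h.
            lam * \<bar>\<beta>$j - clique_mean \<beta> g - (\<beta>$k - clique_mean \<beta> h)\<bar>
              \<le> 1 / real CARD('n) * norm (column j X - column k X) * norm y))"
proof (intro conjI ballI impI)
  fix g j k assume "g \<in> P" "j \<in> g" "k \<in> g"
  text \<open>Within one clique the two means coincide and cancel.\<close>
  from minimiser_centred_difference_bound[OF part lam min this(1,2) this(1,3)]
  show "lam * \<bar>\<beta>$j - \<beta>$k\<bar> \<le> 1 / real CARD('n) * norm (column j X - column k X) * norm y"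
    by simp
next
  fix g h j k assume "g \<in> P" "h \<in> P" "g \<noteq> h" "j \<in> g" "k \<in> h"
  from minimiser_centred_difference_bound[OF part lam min this(1,4) this(2,5)]
  show "lam * \<bar>\<beta>$j - clique_mean \<beta> g - (\<beta>$k - clique_mean \<beta> h)\<bar>
          \<le> 1 / real CARD('n) * norm (column j X - column k X) * norm y" .
qed

end
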